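(* Let $K>0$ and $m>0$ be fixed, and consider $f(q)=q!\left(\frac{m}{K}\right)^q$ for positive integers $q$ (by Theorem 2 of the paper, $f(q)$ is the asymptotic value of $p_{\textnormal{compromised}}/p_s$ in the $q$-composite scheme with key ring size $K$ when $m$ nodes are captured, so with $K$ and $p_s$ fixed this is the quantity to minimize over $q$). Then $f$ attains its minimum over the positive integers at $$q^*=\max\left\{\left\lfloor\frac{K}{m}\right\rfloor,\,1\right\}.$$
   Context: $\lfloor x\rfloor$ denotes the largest integer not exceeding $x$. In the $q$-composite scheme each sensor gets $K$ distinct keys uniformly at random from a key pool, two sensors share a secure link iff their key rings share at least $q$ keys, $p_s$ is the probability of this event, and $p_{\textnormal{compromised}}$ is the probability that a link between two non-captured sensors has all its shared keys held by the $m$ captured sensors. *)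

theory Defs
  imports Complex_Main
begin

definition comp_ratio :: "nat \<Rightarrow> nat \<Rightarrow> nat \<Rightarrow> real" where
  "comp_ratio K m q = fact q * (real m / real K) ^ q"

end

theory Submission
  imports Defs
begin

text \<open>Consecutive values of f(q) = q! (m/K)^q differ by the factor (q+1) m / K, which is at
  most 1 exactly while q + 1 \<le> K/m. Hence f decreases up to \<lfloor>K/m\<rfloor> and increases from
  there on, so \<lfloor>K/m\<rfloor> minimises f over all natural numbers; when \<lfloor>K/m\<rfloor> = 0 the
  minimum over the positive integers is at 1.\<close>

lemma comp_ratio_Suc:
  "comp_ratio K m (Suc q) = comp_ratio K m q * (real (Suc q * m) / real K)"
  unfolding comp_ratio_def by (simp add: algebra_simps)

lemma comp_ratio_nonneg: "comp_ratio K m q \<ge> 0"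
  unfolding comp_ratio_def by simp

lemma comp_ratio_Suc_le:
  assumes "Suc q * m \<le> K"
  shows "comp_ratio K m (Suc q) \<le> comp_ratio K m q"
proof -
  have "real (Suc q * m) \<le> real K"
    using assms by (simp only: of_nat_le_iff)
  then have "real (Suc q * m) / real K \<le> 1"
    by (cases "K = 0") (simp_all add: divide_le_eq_1)
  then show ?thesis
    unfolding comp_ratio_Suc using mult_left_mono[OF _ comp_ratio_nonneg] by fastforce
qed

lemma comp_ratio_le_Suc:
  assumes "K > 0" and "K \<le> Suc q * m"
  shows "comp_ratio K m q \<le> comp_ratio K m (Suc q)"
proof -
  have "real K \<le> real (Suc q * m)"
    using assms(2) by (simp only: of_nat_le_iff)
  then have "1 \<le> real (Suc q * m) / real K"
    using assms(1) by simp
  then show ?thesis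
    unfolding comp_ratio_Suc using mult_left_mono[OF _ comp_ratio_nonneg] by fastforce
qed

lemma comp_ratio_antimono:
  assumes "a \<le> b" and "b \<le> K div m"
  shows "comp_ratio K m b \<le> comp_ratio K m a"
  using assms(1)
proof (induction b rule: dec_induct)
  case base
  then show ?case by simp
next
  case (step n)
  have "Suc n * m \<le> K div m * m"
    using step.hyps(2) assms(2) by (intro mult_right_mono) simp_all
  also have "\<dots> \<le> K"
    by simp
  finally have "comp_ratio K m (Suc n) \<le> comp_ratio K m n"
    by (rule comp_ratio_Suc_le)
  with step.IH show ?case by linarith
qed

lemma comp_ratio_mono:
  assumes "K > 0" and "m > 0" and "K div m \<le> a" and "a \<le> b"
  shows "comp_ratio K m a \<le> comp_ratio K m b"
  using assms(4)
proof (induction b rule: dec_induct)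
  case base
  then show ?case by simp
next
  case (step n)
  have "K div m < Suc n"
    using step.hyps(1) assms(3) by simp
  then have "K \<le> Suc n * m"
    using assms(2) by (simp add: div_less_iff_less_mult)
  then have "comp_ratio K m n \<le> comp_ratio K m (Suc n)"
    by (rule comp_ratio_le_Suc[OF assms(1)])
  with step.IH show ?case by linarith
qed

lemma comp_ratio_div_le:
  assumes "K > 0" and "m > 0"
  shows "comp_ratio K m (K div m) \<le> comp_ratio K m q"
proof (cases "q \<le> K div m")
  case True
  then show ?thesis by (rule comp_ratio_antimono) simp
next
  case False
  then show ?thesis using comp_ratio_mono[OF assms] by simp
qed

theorem corollary2:
  fixes K m :: nat
  assumes "K > 0" and "m > 0"
  defines "qstar \<equiv> max (nat \<lfloor>real K / real m\<rfloor>) 1"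
  shows "qstar \<ge> 1 \<and> (\<forall>q::nat. q \<ge> 1 \<longrightarrow> comp_ratio K m qstar \<le> comp_ratio K m q)"
proof -
  have qstar: "qstar = max (K div m) 1"
    unfolding qstar_def by (metis floor_divide_of_nat_eq nat_int)
  have "comp_ratio K m qstar \<le> comp_ratio K m q" if "q \<ge> 1" for q
  proof (cases "K div m \<ge> 1")
    case True
    then show ?thesis using qstar comp_ratio_div_le[OF assms(1,2)] by simp
  next
    case False
    then show ?thesis using qstar comp_ratio_mono[OF assms(1,2), of 1 q] that by simp
  qed
  then show ?thesis using qstar by simp
qed

end
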